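(* Let $\mathbb{H}=\{z\in\mathbb{C}:\operatorname{Im}z>0\}$. For all $z_1,z_2\in\mathbb{H}$, \[ b_{\mathbb{H},2}(z_1,z_2)=\frac{\sqrt2\,|z_1-z_2|}{\sqrt{|z_1-z_2|^2+|\operatorname{Im}(z_1+z_2)|^2}}=\frac{|z_1-z_2|}{\sqrt{|z_1-m|^2+|z_2-m|^2}}, \] where $m=\operatorname{Re}(z_1+z_2)/2$ (viewed as a point of the real axis).
   Context: For a domain $G\subsetneq\mathbb{C}$ and $z_1,z_2\in G$, $b_{G,2}(z_1,z_2)=\sup_{z\in\partial G}\frac{|z_1-z_2|}{\sqrt{|z_1-z|^2+|z-z_2|^2}}$. *)

theory Defs
  imports "HOL-Analysis.Analysis"
begin

definition b_G2 :: "complex set \<Rightarrow> complex \<Rightarrow> complex \<Rightarrow> real" where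
  "b_G2 G z1 z2 = (SUP z \<in> frontier G. cmod (z1 - z2) / sqrt ((cmod (z1 - z))\<^sup>2 + (cmod (z - z2))\<^sup>2))"

definition upper_half_plane :: "complex set" where
  "upper_half_plane = {z. Im z > 0}"

end

theory Submission
  imports Defs
begin

text \<open>The boundary of the upper half-plane is the real axis, and on the real axis the
  denominator |z1 - x|^2 + |x - z2|^2 is a quadratic in x with minimum at the real part of
  the midpoint of z1 and z2; so the supremum defining b is attained there.\<close>

lemma frontier_upper_half_plane: "frontier upper_half_plane = {z. Im z = 0}"
proof -
  have "upper_half_plane = {z. \<i> \<bullet> z > 0}"
    by (auto simp: upper_half_plane_def inner_complex_def)
  moreover have "{z. \<i> \<bullet> z = (0::real)} = {z. Im z = 0}"
    by (auto simp: inner_complex_def)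
  ultimately show ?thesis
    using frontier_halfspace_gt[of \<i> 0] by simp
qed

lemma b_G2_eq_at_minimizer:
  fixes G :: "complex set" and z1 z2 :: complex
  defines "D \<equiv> \<lambda>z. (cmod (z1 - z))\<^sup>2 + (cmod (z - z2))\<^sup>2"
  assumes "m \<in> frontier G" and "D m > 0" and "\<And>z. z \<in> frontier G \<Longrightarrow> D m \<le> D z"
  shows "b_G2 G z1 z2 = cmod (z1 - z2) / sqrt (D m)"
proof -
  have "b_G2 G z1 z2 = Sup ((\<lambda>z. cmod (z1 - z2) / sqrt (D z)) ` frontier G)"
    by (simp add: b_G2_def D_def)
  also have "\<dots> = cmod (z1 - z2) / sqrt (D m)"
  proof (rule cSup_eq_maximum)
    fix x assume "x \<in> (\<lambda>z. cmod (z1 - z2) / sqrt (D z)) ` frontier G"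
    then obtain z where z: "z \<in> frontier G" and x: "x = cmod (z1 - z2) / sqrt (D z)"
      by blast
    have "sqrt (D m) \<le> sqrt (D z)"
      using assms(4)[OF z] by simp
    with \<open>D m > 0\<close> show "x \<le> cmod (z1 - z2) / sqrt (D m)"
      unfolding x by (simp add: divide_left_mono)
  qed (use assms(2) in blast)
  finally show ?thesis .
qed

lemma sum_sq_dist_real_point:
  fixes z1 z2 x :: complex
  defines "m \<equiv> complex_of_real (Re (z1 + z2) / 2)"
  assumes "Im x = 0"
  shows "(cmod (z1 - x))\<^sup>2 + (cmod (x - z2))\<^sup>2
         = (cmod (z1 - m))\<^sup>2 + (cmod (m - z2))\<^sup>2 + 2 * (Re x - Re m)\<^sup>2"
  using assms unfolding m_def cmod_power2 by (simp add: power2_eq_square field_simps)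

lemma sum_sq_dist_real_midpoint:
  fixes z1 z2 :: complex
  defines "m \<equiv> complex_of_real (Re (z1 + z2) / 2)"
  shows "(cmod (z1 - m))\<^sup>2 + (cmod (m - z2))\<^sup>2
         = ((cmod (z1 - z2))\<^sup>2 + \<bar>Im (z1 + z2)\<bar>\<^sup>2) / 2"
  unfolding m_def cmod_power2 by (simp add: power2_eq_square field_simps)

theorem theorem3p12:
  fixes z1 z2 :: complex
  assumes "z1 \<in> upper_half_plane" and "z2 \<in> upper_half_plane"
  defines "m \<equiv> complex_of_real (Re (z1 + z2) / 2)"
  shows "b_G2 upper_half_plane z1 z2
           = sqrt 2 * cmod (z1 - z2) / sqrt ((cmod (z1 - z2))\<^sup>2 + \<bar>Im (z1 + z2)\<bar>\<^sup>2)
         \<and> b_G2 upper_half_plane z1 z2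
           = cmod (z1 - z2) / sqrt ((cmod (z1 - m))\<^sup>2 + (cmod (z2 - m))\<^sup>2)"
proof -
  let ?Dm = "(cmod (z1 - m))\<^sup>2 + (cmod (m - z2))\<^sup>2"
  have "\<bar>Im (z1 + z2)\<bar>\<^sup>2 > 0"
    using assms(1,2) by (simp add: upper_half_plane_def)
  then have Dm_pos: "?Dm > 0"
    unfolding m_def sum_sq_dist_real_midpoint
    by (metis add_nonneg_pos half_gt_zero zero_le_power2)
  have b: "b_G2 upper_half_plane z1 z2 = cmod (z1 - z2) / sqrt ?Dm"
  proof (rule b_G2_eq_at_minimizer)
    show "m \<in> frontier upper_half_plane"
      by (simp add: frontier_upper_half_plane m_def)
    show "?Dm \<le> (cmod (z1 - z))\<^sup>2 + (cmod (z - z2))\<^sup>2" if "z \<in> frontier upper_half_plane" for z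
      using that sum_sq_dist_real_point[of z z1 z2] unfolding m_def frontier_upper_half_plane
      by simp
  qed (use Dm_pos in simp)
  have "sqrt 2 * cmod (z1 - z2) / sqrt ((cmod (z1 - z2))\<^sup>2 + \<bar>Im (z1 + z2)\<bar>\<^sup>2)
        = cmod (z1 - z2) / sqrt ?Dm"
    unfolding m_def sum_sq_dist_real_midpoint by (simp add: real_sqrt_divide)
  with b show ?thesis
    by (simp add: norm_minus_commute)
qed

end
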